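(* For every finite field $\mathbb{F}_q$ and every pair of integers $s,t\ge1$, the linear code $C=\bigoplus_{i=1}^{s}\mathrm{Rep}_t(\mathbb{F}_q)\le\mathbb{F}_q^{st}$ is an abelian group code.
   Context: $\mathrm{Rep}_t(\mathbb{F}_q)=\{(\lambda,\dots,\lambda):\lambda\in\mathbb{F}_q\}\le\mathbb{F}_q^t$ is the repetition code; the direct sum consists of vectors in $\mathbb{F}_q^{st}$ formed by concatenating $s$ blocks, each block a constant vector of length $t$. Let $\mathcal{B}=\{e_1,\dots,e_n\}$ be the standard basis of $\mathbb{F}_q^n$. For a finite group $H$ of order $n$, a linear code $C\le\mathbb{F}_q^n$ is an $H$-code if there exists a bijection $\phi:\mathcal{B}\to H$ whose $\mathbb{F}_q$-linear extension $\tilde\phi:\mathbb{F}_q^n\to\mathbb{F}_q[H]$ maps $C$ onto a two-sided ideal of the group algebra $\mathbb{F}_q[H]$. $C$ is an abelian group code if it is an $H$-code for some abelian group $H$. *)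

theory Defs
  imports "HOL-Algebra.Group"
begin

text \<open>Vectors of F^n: functions nat => F vanishing outside {0..<n};
  coordinate i (0-based) corresponds to the standard basis vector e_(i+1).\<close>
definition vecs :: "nat \<Rightarrow> (nat \<Rightarrow> 'a::zero) set" where
  "vecs n = {v. \<forall>i\<ge>n. v i = 0}"

definition rep_code :: "nat \<Rightarrow> (nat \<Rightarrow> 'a::zero) set" where
  "rep_code t = {v \<in> vecs t. \<exists>c. \<forall>i<t. v i = c}"

definition rep_dsum :: "nat \<Rightarrow> nat \<Rightarrow> (nat \<Rightarrow> 'a::zero) set" where
  "rep_dsum s t = {v \<in> vecs (s * t).
      \<forall>j<s. (\<lambda>k. if k < t then v (j * t + k) else 0) \<in> rep_code t}"

definition grp_alg :: "('g, 'b) monoid_scheme \<Rightarrow> ('g \<Rightarrow> 'a::zero) set" where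
  "grp_alg H = {f. \<forall>x. x \<notin> carrier H \<longrightarrow> f x = 0}"

definition conv :: "('g, 'b) monoid_scheme \<Rightarrow> ('g \<Rightarrow> 'a::comm_ring_1) \<Rightarrow> ('g \<Rightarrow> 'a) \<Rightarrow> ('g \<Rightarrow> 'a)" where
  "conv H f g = (\<lambda>h. if h \<in> carrier H
      then (\<Sum>x\<in>carrier H. f x * g (inv\<^bsub>H\<^esub> x \<otimes>\<^bsub>H\<^esub> h)) else 0)"

definition two_sided_ideal :: "('g, 'b) monoid_scheme \<Rightarrow> ('g \<Rightarrow> 'a::comm_ring_1) set \<Rightarrow> bool" where
  "two_sided_ideal H I \<longleftrightarrow> I \<subseteq> grp_alg H \<and> (\<lambda>_. 0) \<in> I
     \<and> (\<forall>a\<in>I. \<forall>b\<in>I. (\<lambda>x. a x + b x) \<in> I)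
     \<and> (\<forall>a\<in>I. (\<lambda>x. - a x) \<in> I)
     \<and> (\<forall>f\<in>grp_alg H. \<forall>a\<in>I. conv H f a \<in> I \<and> conv H a f \<in> I)"

definition lin_ext :: "nat \<Rightarrow> (nat \<Rightarrow> 'g) \<Rightarrow> (nat \<Rightarrow> 'a::comm_ring_1) \<Rightarrow> ('g \<Rightarrow> 'a)" where
  "lin_ext n \<phi> v = (\<lambda>h. \<Sum>i<n. v i * (if \<phi> i = h then 1 else 0))"

definition is_H_code :: "nat \<Rightarrow> (nat \<Rightarrow> 'a::comm_ring_1) set \<Rightarrow> ('g, 'b) monoid_scheme \<Rightarrow> bool" where
  "is_H_code n C H \<longleftrightarrow> group H \<and> finite (carrier H) \<and> card (carrier H) = n \<and>
     (\<exists>\<phi>. bij_betw \<phi> {..<n} (carrier H) \<and> two_sided_ideal H (lin_ext n \<phi> ` C))"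

text \<open>Abelian group code. Every finite group of order n is isomorphic to a group
  whose carrier is a subset of nat, so quantifying over such groups loses nothing.\<close>
definition abelian_group_code :: "nat \<Rightarrow> (nat \<Rightarrow> 'a::comm_ring_1) set \<Rightarrow> bool" where
  "abelian_group_code n C \<longleftrightarrow> (\<exists>H :: nat monoid. comm_group H \<and> is_H_code n C H)"

end

theory Submission
  imports Defs
begin

text \<open>Index the coordinates of F^(s t) by the abelian group Z_s x Z_t, sending
  coordinate j t + k to (j, k). The blocks of coordinates are then the cosets of the
  subgroup {0} x Z_t, so the direct sum of repetition codes becomes the space of
  functions invariant under right translation by that subgroup. Right translation
  commutes with left convolution, so this space is a left ideal, and since the group
  algebra of an abelian group is commutative it is a two-sided ideal.\<close>

definition invariant_functions :: "('g, 'b) monoid_scheme \<Rightarrow> 'g set \<Rightarrow> ('g \<Rightarrow> 'a::zero) set" where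
  "invariant_functions G K =
     {f \<in> grp_alg G. \<forall>x\<in>carrier G. \<forall>k\<in>K. f (x \<otimes>\<^bsub>G\<^esub> k) = f x}"

lemma conv_in_invariant_functions:
  assumes "group G" and "K \<subseteq> carrier G" and a: "a \<in> invariant_functions G K"
  shows "conv G f a \<in> invariant_functions G K"
proof -
  interpret G: group G by fact
  have "conv G f a (h \<otimes>\<^bsub>G\<^esub> k) = conv G f a h" if h: "h \<in> carrier G" and k: "k \<in> K" for h k
  proof -
    have "k \<in> carrier G" using k assms(2) by blast
    then have "a (inv\<^bsub>G\<^esub> x \<otimes>\<^bsub>G\<^esub> (h \<otimes>\<^bsub>G\<^esub> k)) = a (inv\<^bsub>G\<^esub> x \<otimes>\<^bsub>G\<^esub> h)"
      if "x \<in> carrier G" for x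
      using a h k that by (simp add: invariant_functions_def G.m_assoc[symmetric])
    then show ?thesis using h \<open>k \<in> carrier G\<close> by (simp add: conv_def)
  qed
  then show ?thesis by (simp add: invariant_functions_def grp_alg_def conv_def)
qed

lemma conv_commute:
  assumes "comm_group G"
  shows "conv G a f = conv G f (a :: 'g \<Rightarrow> 'a::comm_ring_1)"
proof
  interpret G: comm_group G by fact
  fix h
  show "conv G a f h = conv G f a h"
  proof (cases "h \<in> carrier G")
    case h: True
    \<comment> \<open>substitute y = h x^-1, an involution of the carrier\<close>
    have "(\<Sum>x\<in>carrier G. a x * f (inv\<^bsub>G\<^esub> x \<otimes>\<^bsub>G\<^esub> h))
        = (\<Sum>y\<in>carrier G. f y * a (inv\<^bsub>G\<^esub> y \<otimes>\<^bsub>G\<^esub> h))"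
      by (rule sum.reindex_bij_witness[where i = "\<lambda>x. h \<otimes>\<^bsub>G\<^esub> inv\<^bsub>G\<^esub> x"
                                             and j = "\<lambda>x. h \<otimes>\<^bsub>G\<^esub> inv\<^bsub>G\<^esub> x"])
         (use h in \<open>auto simp: G.inv_mult G.m_assoc G.m_comm[of h] mult.commute\<close>)
    then show ?thesis using h by (simp add: conv_def)
  qed (simp add: conv_def)
qed

lemma two_sided_ideal_invariant_functions:
  assumes "comm_group G" and "K \<subseteq> carrier G"
  shows "two_sided_ideal G (invariant_functions G K :: ('g \<Rightarrow> 'a::comm_ring_1) set)"
proof -
  have "group G" using assms(1) comm_group.axioms(2) by blast
  then have "conv G f a \<in> invariant_functions G K \<and> conv G a f \<in> invariant_functions G K"
    if "a \<in> invariant_functions G K" for f a :: "'g \<Rightarrow> 'a"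
    using conv_in_invariant_functions[OF _ assms(2) that] conv_commute[OF assms(1)] by metis
  then show ?thesis
    by (auto simp: two_sided_ideal_def invariant_functions_def grp_alg_def)
qed

text \<open>Z_s x Z_t, with (j, k) stored as the number j t + k.\<close>
definition block_group :: "nat \<Rightarrow> nat \<Rightarrow> nat monoid" where
  "block_group s t =
     \<lparr>carrier = {..<s * t}, mult = \<lambda>x y. ((x div t + y div t) mod s) * t + (x + y) mod t, one = 0\<rparr>"

lemma carrier_block_group [simp]: "carrier (block_group s t) = {..<s * t}"
  by (simp add: block_group_def)

lemma one_block_group [simp]: "\<one>\<^bsub>block_group s t\<^esub> = 0"
  by (simp add: block_group_def)

lemma mult_block_group [simp]:
  "x \<otimes>\<^bsub>block_group s t\<^esub> y = ((x div t + y div t) mod s) * t + (x + y) mod t"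
  by (simp add: block_group_def)

lemma block_group_mult_block:
  assumes "x < s * t" and "k < t"
  shows "x \<otimes>\<^bsub>block_group s t\<^esub> k = x div t * t + (x mod t + k) mod t"
  using assms by (simp add: less_mult_imp_div_less mod_add_left_eq)

lemma div_block_group_mult:
  "0 < t \<Longrightarrow> (x \<otimes>\<^bsub>block_group s t\<^esub> y) div t = (x div t + y div t) mod s"
  by simp

lemma mod_block_group_mult:
  "0 < t \<Longrightarrow> (x \<otimes>\<^bsub>block_group s t\<^esub> y) mod t = (x + y) mod t"
  by simp

lemma block_group_mult_assoc:
  assumes "0 < t"
  shows "x \<otimes>\<^bsub>block_group s t\<^esub> y \<otimes>\<^bsub>block_group s t\<^esub> z
      = x \<otimes>\<^bsub>block_group s t\<^esub> (y \<otimes>\<^bsub>block_group s t\<^esub> z)"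
proof -
  let ?xy = "x \<otimes>\<^bsub>block_group s t\<^esub> y" and ?yz = "y \<otimes>\<^bsub>block_group s t\<^esub> z"
  have "(?xy div t + z div t) mod s = (x div t + ?yz div t) mod s"
    using assms
    by (simp add: div_block_group_mult mod_add_left_eq mod_add_right_eq add.assoc
        del: mult_block_group)
  moreover have "(?xy + z) mod t = (x + ?yz) mod t"
    using mod_add_left_eq[of ?xy t z] mod_add_right_eq[of x ?yz t] assms
    by (simp only: mod_block_group_mult) (simp add: mod_add_left_eq mod_add_right_eq add.assoc)
  ultimately show ?thesis by (simp only: mult_block_group)
qed

lemma mod_complement_add_mod: "(d::nat) \<le> m \<Longrightarrow> ((m - d) mod m + d) mod m = 0"
  by (simp add: mod_add_left_eq)

lemma comm_group_block_group:
  assumes "0 < s" and "0 < t"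
  shows "comm_group (block_group s t)"
proof (rule comm_groupI)
  have encode_lt: "(j mod s) * t + k mod t < s * t" for j k
  proof -
    have "(j mod s) * t + k mod t < (j mod s) * t + t" using assms(2) by simp
    also have "\<dots> \<le> s * t" using assms(1) mod_less_divisor[of s j]
      by (metis add.commute mult_Suc less_eq_Suc_le mult_le_mono1)
    finally show ?thesis .
  qed
  fix x y z
  show "x \<otimes>\<^bsub>block_group s t\<^esub> y \<in> carrier (block_group s t)"
    using encode_lt by simp
  show "x \<otimes>\<^bsub>block_group s t\<^esub> y = y \<otimes>\<^bsub>block_group s t\<^esub> x"
    by (simp add: add.commute)
  show "x \<otimes>\<^bsub>block_group s t\<^esub> y \<otimes>\<^bsub>block_group s t\<^esub> z
      = x \<otimes>\<^bsub>block_group s t\<^esub> (y \<otimes>\<^bsub>block_group s t\<^esub> z)"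
    using assms(2) by (rule block_group_mult_assoc)
  show "\<one>\<^bsub>block_group s t\<^esub> \<in> carrier (block_group s t)"
    using assms by simp
  assume "x \<in> carrier (block_group s t)"
  then have x_div: "x div t < s" by (simp add: less_mult_imp_div_less)
  then show "\<one>\<^bsub>block_group s t\<^esub> \<otimes>\<^bsub>block_group s t\<^esub> x = x"
    by simp
  define y where "y = ((s - x div t) mod s) * t + (t - x mod t) mod t"
  have "y \<otimes>\<^bsub>block_group s t\<^esub> x = 0"
  proof -
    have "(y div t + x div t) mod s = 0"
      using assms x_div by (simp add: y_def mod_complement_add_mod)
    moreover have "(y + x) mod t = 0"
      using assms mod_complement_add_mod[of "x mod t" t]
      by (simp add: y_def mod_add_right_eq[of _ x, symmetric] add.assoc)
    ultimately show ?thesis by simp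
  qed
  moreover have "y \<in> carrier (block_group s t)"
    using encode_lt by (simp add: y_def)
  ultimately show "\<exists>y \<in> carrier (block_group s t). y \<otimes>\<^bsub>block_group s t\<^esub> x = \<one>\<^bsub>block_group s t\<^esub>"
    by (metis one_block_group)
qed

lemma lin_ext_id: "v \<in> vecs n \<Longrightarrow> lin_ext n id v = v"
proof
  fix h
  assume "v \<in> vecs n"
  have "lin_ext n id v h = (\<Sum>i<n. if i = h then v i else 0)"
    unfolding lin_ext_def by (intro sum.cong) auto
  also have "\<dots> = v h"
    using \<open>v \<in> vecs n\<close> by (simp add: vecs_def)
  finally show "lin_ext n id v h = v h" .
qed

lemma grp_alg_block_group: "grp_alg (block_group s t) = vecs (s * t)"
  by (auto simp: grp_alg_def vecs_def)

lemma rep_dsum_eq_invariant_functions: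
  assumes "0 < t"
  shows "rep_dsum s t = invariant_functions (block_group s t) {..<t}"
proof (intro equalityI subsetI)
  fix v :: "nat \<Rightarrow> 'a"
  assume v: "v \<in> rep_dsum s t"
  have "v (x \<otimes>\<^bsub>block_group s t\<^esub> k) = v x" if "x < s * t" and "k < t" for x k
  proof -
    have "x div t < s" using \<open>x < s * t\<close> by (simp add: less_mult_imp_div_less)
    then obtain c where c: "\<forall>i<t. v (x div t * t + i) = c"
      using v by (auto simp: rep_dsum_def rep_code_def)
    have "v x = c"
      using c assms by (metis div_mult_mod_eq mod_less_divisor)
    moreover have "v (x \<otimes>\<^bsub>block_group s t\<^esub> k) = c"
      using c assms that by (simp add: block_group_mult_block del: mult_block_group)
    ultimately show ?thesis by simp
  qed
  with v show "v \<in> invariant_functions (block_group s t) {..<t}"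
    by (simp add: invariant_functions_def grp_alg_block_group rep_dsum_def)
next
  fix v :: "nat \<Rightarrow> 'a"
  assume v: "v \<in> invariant_functions (block_group s t) {..<t}"
  have "v (j * t + k) = v (j * t)" if "j < s" and "k < t" for j k
  proof -
    have "j * t < s * t" using that assms by simp
    with v that have "v (j * t \<otimes>\<^bsub>block_group s t\<^esub> k) = v (j * t)"
      by (simp add: invariant_functions_def del: mult_block_group)
    with that \<open>j * t < s * t\<close> show ?thesis
      by (simp add: block_group_mult_block del: mult_block_group)
  qed
  with v show "v \<in> rep_dsum s t"
    by (auto simp: invariant_functions_def grp_alg_block_group rep_dsum_def rep_code_def vecs_def)
qed

theorem theorem3:
  fixes s t :: nat
  assumes "s \<ge> 1" and "t \<ge> 1"
  shows "abelian_group_code (s * t) (rep_dsum s t :: (nat \<Rightarrow> 'a::{finite, field}) set)"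
proof -
  let ?H = "block_group s t" and ?C = "rep_dsum s t :: (nat \<Rightarrow> 'a) set"
  have comm: "comm_group ?H"
    using assms by (simp add: comm_group_block_group)
  have "lin_ext (s * t) id ` ?C = ?C"
    by (force simp: rep_dsum_def lin_ext_id)
  also have "\<dots> = invariant_functions ?H {..<t}"
    using assms by (simp add: rep_dsum_eq_invariant_functions)
  finally have "two_sided_ideal ?H (lin_ext (s * t) id ` ?C)"
    using two_sided_ideal_invariant_functions[OF comm, of "{..<t}"] assms by simp
  then have "is_H_code (s * t) ?C ?H"
    using comm by (auto simp: is_H_code_def comm_group_def)
  with comm show ?thesis
    by (auto simp: abelian_group_code_def)
qed

end
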